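(* (i) If $j\in A$, then $\lfloor(\varphi-1)(\lfloor\varphi j\rfloor+1)\rfloor=j$. (ii) If $j\in B$, then $\lfloor\varphi\lfloor(\varphi-1)j\rfloor\rfloor+1=j$.
   Context: $\mathbb N=\{1,2,\dots\}$, $\varphi=\frac{1+\sqrt5}{2}$, $A=\{\lfloor n\varphi\rfloor\mid n\in\mathbb N\}$ and $B=\{\lfloor n\varphi^2\rfloor\mid n\in\mathbb N\}$. *)

theory Defs
  imports Complex_Main
begin

definition phi :: real where
  "phi = (1 + sqrt 5) / 2"

definition setA :: "int set" where
  "setA = {\<lfloor>real n * phi\<rfloor> | n :: nat. n \<ge> 1}"

definition setB :: "int set" where
  "setB = {\<lfloor>real n * phi ^ 2\<rfloor> | n :: nat. n \<ge> 1}"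

end

theory Submission
  imports Defs
begin

(* Write f for the fractional part of n \<phi>.  From \<phi>^2 = \<phi> + 1,
     \<phi> \<lfloor>n \<phi>\<rfloor> = n + \<lfloor>n \<phi>\<rfloor> - (\<phi> - 1) f   and   (\<phi> - 1) (n + \<lfloor>n \<phi>\<rfloor>) = \<lfloor>n \<phi>\<rfloor> + (2 - \<phi>) f,
   and both corrections lie strictly between 0 and 1, since 1 < \<phi> < 2 and f > 0 by the
   irrationality of \<phi>.  Moreover \<lfloor>n \<phi>^2\<rfloor> = n + \<lfloor>n \<phi>\<rfloor>, so both claims follow. *)

lemma phi_squared: "phi ^ 2 = phi + 1"
  unfolding phi_def by (simp add: power2_eq_square field_simps)

lemma phi_gt_1: "1 < phi"
  and phi_less_2: "phi < 2"
proof -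
  have "1 < sqrt (5::real)" and "sqrt (5::real) < 3"
    by (simp_all add: real_less_lsqrt)
  then show "1 < phi" and "phi < 2"
    unfolding phi_def by simp_all
qed

lemma odd_golden_form:
  fixes p q :: int
  assumes "odd p \<or> odd q"
  shows "odd (p * p - p * q - q * q)"
  using assms by auto

lemma phi_irrational: "phi \<notin> \<rat>"
proof
  assume "phi \<in> \<rat>"
  then obtain p q :: int where q: "q > 0" "coprime p q" and phi: "phi = of_int p / of_int q"
    by (rule Rats_cases')
  have "of_int (p * p - p * q - q * q) = (of_int q) ^ 2 * (phi ^ 2 - phi - 1 :: real)"
    using q(1) by (simp add: phi power2_eq_square field_simps)
  then have "real_of_int (p * p - p * q - q * q) = 0"
    by (simp add: phi_squared)
  then have "p * p - p * q - q * q = 0"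
    by (simp only: of_int_eq_0_iff)
  moreover have "odd p \<or> odd q"
    using q(2) by (metis coprime_common_divisor odd_one)
  ultimately show False
    using odd_golden_form by (metis even_zero)
qed

lemma mult_phi_not_Int:
  fixes n :: int
  assumes "n \<noteq> 0"
  shows "of_int n * phi \<notin> \<int>"
proof
  assume "of_int n * phi \<in> \<int>"
  then have "of_int n * phi / of_int n \<in> \<rat>"
    using Ints_subset_Rats by (intro Rats_divide) auto
  then show False
    using assms phi_irrational by simp
qed

lemma floor_mult_phi_squared:
  fixes n :: int
  shows "\<lfloor>of_int n * phi ^ 2\<rfloor> = n + \<lfloor>of_int n * phi\<rfloor>"
  by (simp add: phi_squared algebra_simps)

lemma floor_phi_mult_floor_mult_phi:
  fixes n :: int
  assumes "n \<noteq> 0"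
  shows "\<lfloor>phi * of_int \<lfloor>of_int n * phi\<rfloor>\<rfloor> = n + \<lfloor>of_int n * phi\<rfloor> - 1"
proof -
  define f where "f = frac (of_int n * phi)"
  have "0 < f" "f < 1"
    using mult_phi_not_Int[OF assms] frac_lt_1 by (simp_all add: f_def)
  then have bounds: "0 < (phi - 1) * f" "(phi - 1) * f < 1"
    using phi_gt_1 phi_less_2 mult_strict_mono[of "phi - 1" 1 f 1] by simp_all
  have "phi * of_int \<lfloor>of_int n * phi\<rfloor> = phi * (of_int n * phi - f)"
    by (simp add: f_def frac_def)
  also have "\<dots> = of_int n * phi ^ 2 - phi * f"
    by (simp add: power2_eq_square algebra_simps)
  also have "\<dots> = of_int n + (of_int n * phi - f) - (phi - 1) * f"
    by (simp add: phi_squared algebra_simps)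
  also have "\<dots> = of_int (n + \<lfloor>of_int n * phi\<rfloor>) - (phi - 1) * f"
    by (simp add: f_def frac_def)
  finally show ?thesis
    using bounds by (simp add: floor_eq_iff)
qed

lemma floor_phi_minus_1_mult:
  fixes n :: int
  assumes "n \<noteq> 0"
  shows "\<lfloor>(phi - 1) * of_int (n + \<lfloor>of_int n * phi\<rfloor>)\<rfloor> = \<lfloor>of_int n * phi\<rfloor>"
proof -
  define f where "f = frac (of_int n * phi)"
  have "0 < f" "f < 1"
    using mult_phi_not_Int[OF assms] frac_lt_1 by (simp_all add: f_def)
  then have bounds: "0 < (2 - phi) * f" "(2 - phi) * f < 1"
    using phi_gt_1 phi_less_2 mult_strict_mono[of "2 - phi" 1 f 1] by simp_all
  have "(phi - 1) * of_int (n + \<lfloor>of_int n * phi\<rfloor>) = (phi - 1) * (of_int n + of_int n * phi - f)"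
    by (simp add: f_def frac_def)
  also have "\<dots> = of_int n * (phi ^ 2 - 1) - (phi - 1) * f"
    by (simp add: power2_eq_square algebra_simps)
  also have "\<dots> = (of_int n * phi - f) + (2 - phi) * f"
    by (simp add: phi_squared algebra_simps)
  also have "\<dots> = of_int \<lfloor>of_int n * phi\<rfloor> + (2 - phi) * f"
    by (simp add: f_def frac_def)
  finally show ?thesis
    using bounds by (simp add: floor_eq_iff)
qed

theorem proposition5p6:
  shows "(\<forall>j\<in>setA. \<lfloor>(phi - 1) * (of_int \<lfloor>phi * of_int j\<rfloor> + 1)\<rfloor> = j) \<and>
         (\<forall>j\<in>setB. \<lfloor>phi * of_int \<lfloor>(phi - 1) * of_int j\<rfloor>\<rfloor> + 1 = j)"
proof (intro conjI ballI)
  fix j assume "j \<in> setA"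
  then obtain n :: nat where n: "n \<ge> 1" and j: "j = \<lfloor>real n * phi\<rfloor>"
    unfolding setA_def by auto
  have "of_int \<lfloor>phi * of_int j\<rfloor> + 1 = real n + of_int j"
    using floor_phi_mult_floor_mult_phi[of "int n"] n j by simp
  then show "\<lfloor>(phi - 1) * (of_int \<lfloor>phi * of_int j\<rfloor> + 1)\<rfloor> = j"
    using floor_phi_minus_1_mult[of "int n"] n j by simp
next
  fix j assume "j \<in> setB"
  then obtain n :: nat where n: "n \<ge> 1" and "j = \<lfloor>real n * phi ^ 2\<rfloor>"
    unfolding setB_def by auto
  then have j: "j = int n + \<lfloor>real n * phi\<rfloor>"
    using floor_mult_phi_squared[of "int n"] by simp
  then have "\<lfloor>(phi - 1) * of_int j\<rfloor> = \<lfloor>real n * phi\<rfloor>"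
    using floor_phi_minus_1_mult[of "int n"] n by simp
  then show "\<lfloor>phi * of_int \<lfloor>(phi - 1) * of_int j\<rfloor>\<rfloor> + 1 = j"
    using floor_phi_mult_floor_mult_phi[of "int n"] n j by simp
qed

end
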